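(* Let $\alpha>0$ and let $f_1,f_2:\Delta^1\to\mathbb R$ be measurable functions, where $\Delta^1=\{(a,b)\in[0,1]^2: a+b=1\}$, such that (1) $f_i(0,1)=f_i(1,0)=0$ for $i=1,2$; and (2) for all $(p_0,p_1,p_2)\in\Delta^2$, $(1-p_2)^\alpha f_1\!\left(\tfrac{p_0}{1-p_2},\tfrac{p_1}{1-p_2}\right)-f_1(1-p_1,p_1)=(1-p_1)^\alpha f_2\!\left(\tfrac{p_0}{1-p_1},\tfrac{p_2}{1-p_1}\right)-f_2(1-p_2,p_2)$, with the convention that a term $(1-p_i)^\alpha f_j(\cdot)$ is $0$ when $p_i=1$. Then $f_1=f_2$ and there exists $\lambda\in\mathbb R$ such that $f_1(p,1-p)=\lambda s_\alpha(p)$ for all $p\in[0,1]$.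
   Context: $\Delta^2=\{(p_0,p_1,p_2)\in[0,1]^3:p_0+p_1+p_2=1\}$. $s_1(p)=-p\log p-(1-p)\log(1-p)$ (with $0\log0=0$) and, for $\alpha\ne1$, $s_\alpha(p)=\frac1{1-\alpha}(p^\alpha+(1-p)^\alpha-1)$, for $p\in[0,1]$. *)

theory Defs
  imports "HOL-Analysis.Analysis"
begin

definition simplex1 :: "(real \<times> real) set" where
  "simplex1 = {(a, b). 0 \<le> a \<and> a \<le> 1 \<and> 0 \<le> b \<and> b \<le> 1 \<and> a + b = 1}"

definition simplex2 :: "(real \<times> real \<times> real) set" where
  "simplex2 = {(p0, p1, p2). 0 \<le> p0 \<and> p0 \<le> 1 \<and> 0 \<le> p1 \<and> p1 \<le> 1 \<and>
                 0 \<le> p2 \<and> p2 \<le> 1 \<and> p0 + p1 + p2 = 1}"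

definition xlogx :: "real \<Rightarrow> real" where
  "xlogx x = (if x = 0 then 0 else x * ln x)"

definition s_alpha :: "real \<Rightarrow> real \<Rightarrow> real" where
  "s_alpha \<alpha> p = (if \<alpha> = 1 then - xlogx p - xlogx (1 - p)
                    else (p powr \<alpha> + (1 - p) powr \<alpha> - 1) / (1 - \<alpha>))"

definition scaled_term :: "real \<Rightarrow> (real \<times> real \<Rightarrow> real) \<Rightarrow> real \<Rightarrow> real \<Rightarrow> real \<Rightarrow> real" where
  "scaled_term \<alpha> f q x y = (if q = 1 then 0 else (1 - q) powr \<alpha> * f (x / (1 - q), y / (1 - q)))"

end

theory Submission
  imports Defs
begin

(* Put H p = f1 (1 - p, p) and let G (u, v) = (u + v) powr alpha * H (v / (u + v)) be its
   homogeneous extension of degree alpha.  The functional equation says that G is a 2-cocycle,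
   G (u, v) + G (u + v, w) = G (u, v + w) + G (v, w), and, at p0 = 0, that f2 is the reflection of f1.
   Measurability makes H bounded on compact subintervals of (0, 1): a value H x is a combination of
   three other values of H, and the set of large values, having small measure, cannot contain all
   three for every choice of the free parameter.  Then G is locally bounded, and integrating the
   cocycle identity writes it as a coboundary phi (u + v) - phi u - phi v, so G is symmetric.
   For alpha ~= 1, symmetry, homogeneity and the cocycle identity with (u, u, v, v) already pin H
   down to a multiple of s_alpha.  For alpha = 1, homogeneity makes phi x / x - phi 1 additive in
   ln x and locally bounded, hence linear in ln x, which yields the Shannon entropy. *)

section \<open>Measurable solutions are locally bounded\<close>

lemma lmeasurable_if_borel_bounded:
  fixes S :: "'a::euclidean_space set"
  assumes "S \<in> sets borel" "bounded S"
  shows "S \<in> lmeasurable"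
  using assms sets_completionI_sets[of S lborel] by (intro bounded_set_imp_lmeasurable) auto

lemma measure_preimage_le:
  fixes g g' :: "real \<Rightarrow> real"
  assumes B: "B \<in> sets borel" "bounded B"
    and g_meas: "g \<in> borel_measurable borel"
    and deriv: "\<And>y. y \<in> {a..b} \<Longrightarrow> (g has_real_derivative g' y) (at y)"
    and m: "m > 0" "\<And>y. y \<in> {a..b} \<Longrightarrow> m \<le> \<bar>g' y\<bar>"
    and inj: "inj_on g {a..b}"
  shows "measure lebesgue {y\<in>{a..b}. g y \<in> B} \<le> measure lebesgue B / m"
proof -
  define S where "S = {y\<in>{a..b}. g y \<in> B}"
  have "S \<in> sets borel" unfolding S_def using g_meas B by measurable
  moreover have "bounded S" by (rule bounded_subset[of "{a..b}"]) (auto simp: S_def)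
  ultimately have S: "S \<in> lmeasurable" by (rule lmeasurable_if_borel_bounded)
  have cont: "continuous_on {a..b} g"
    using deriv by (meson DERIV_isCont continuous_at_imp_continuous_on)
  have gS: "g ` S = g ` {a..b} \<inter> B" unfolding S_def by auto
  have "g ` S \<in> sets borel"
    unfolding gS using B compact_continuous_image[OF cont compact_Icc]
    by (simp add: borel_closed compact_imp_closed sets.Int)
  moreover have "bounded (g ` S)" using B(2) gS bounded_subset by blast
  ultimately have gS_meas: "g ` S \<in> lmeasurable" by (rule lmeasurable_if_borel_bounded)
  have "(\<lambda>x. \<bar>g' x\<bar> * 1) absolutely_integrable_on S \<and>
        integral S (\<lambda>x. \<bar>g' x\<bar> * 1) = measure lebesgue (g ` S) \<longleftrightarrow>
        (\<lambda>x. 1::real) absolutely_integrable_on (g ` S) \<and>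
        integral (g ` S) (\<lambda>x. 1::real) = measure lebesgue (g ` S)"
    by (rule has_absolute_integral_change_of_variables_1'[where f="\<lambda>_. 1"])
       (use S deriv inj in \<open>auto simp: S_def intro: has_field_derivative_at_within inj_on_subset\<close>)
  moreover have "(\<lambda>x. 1::real) absolutely_integrable_on (g ` S) \<and>
      integral (g ` S) (\<lambda>x. 1) = measure lebesgue (g ` S)"
    using gS_meas
    by (simp add: absolutely_integrable_on_iff_nonneg lmeasurable_iff_integrable_on lmeasure_integral)
  ultimately have g'_int: "(\<lambda>x. \<bar>g' x\<bar>) integrable_on S"
    and g'_integral: "integral S (\<lambda>x. \<bar>g' x\<bar>) = measure lebesgue (g ` S)"
    by (auto dest: absolutely_integrable_on_def[THEN iffD1])
  have "m * measure lebesgue S = integral S (\<lambda>x. m)"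
    using S integral_mult_right[of S m "\<lambda>x. 1::real"] by (simp add: lmeasure_integral)
  also have "\<dots> \<le> integral S (\<lambda>x. \<bar>g' x\<bar>)"
    by (rule integral_le) (use S g'_int m in \<open>auto simp: S_def integrable_on_const\<close>)
  also have "\<dots> \<le> measure lebesgue B"
    unfolding g'_integral using B gS gS_meas
    by (intro measure_mono_fmeasurable) (auto intro: lmeasurable_if_borel_bounded)
  finally show ?thesis using m unfolding S_def by (simp add: field_simps mult.commute)
qed

lemma measure_superlevel_set_small:
  fixes f :: "real \<Rightarrow> real"
  assumes f [measurable]: "f \<in> borel_measurable borel" and "e > 0"
  obtains n :: nat where "measure lebesgue {z\<in>{a..b}. real n < \<bar>f z\<bar>} < e"
proof -
  define A where "A n = {z\<in>{a..b}. real n < \<bar>f z\<bar>}" for n :: nat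
  have A_meas: "A n \<in> lmeasurable" for n
  proof (rule lmeasurable_if_borel_bounded)
    show "A n \<in> sets borel" unfolding A_def by measurable
  qed (auto simp: A_def intro: bounded_subset[of "{a..b}"])
  have "(\<Inter>n. A n) = {}"
  proof (rule equals0I)
    fix z assume z: "z \<in> (\<Inter>n. A n)"
    obtain n :: nat where "\<bar>f z\<bar> < real n" using reals_Archimedean2 by blast
    moreover have "z \<in> A n" using z by blast
    ultimately show False by (simp add: A_def)
  qed
  moreover have "decseq A" unfolding decseq_def A_def by auto
  moreover have "range A \<subseteq> sets lebesgue" using A_meas by (auto intro: fmeasurableD)
  moreover have "emeasure lebesgue (A n) \<noteq> \<infinity>" for n
    using A_meas by (metis fmeasurableD2 infinity_ennreal_def)
  ultimately have "(\<lambda>n. measure lebesgue (A n)) \<longlonglongrightarrow> 0"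
    using Lim_measure_decseq[of A lebesgue] by simp
  then have "eventually (\<lambda>n. measure lebesgue (A n) < e) sequentially"
    using \<open>e > 0\<close> by (rule order_tendstoD)
  then show ?thesis using that unfolding A_def by (meson eventually_sequentially order.refl)
qed

lemma measure_bad_shifts_le:
  fixes x :: real
  assumes B: "B \<in> sets borel" "B \<subseteq> {0..1}"
    and x: "0 < x" "x < 1"
  shows "measure lebesgue {y\<in>{0..1 - x}. x / (1 - y) \<in> B \<or> (1 - x - y) / (1 - x) \<in> B \<or> 1 - y \<in> B}
    \<le> measure lebesgue B * (1 / x + 2)"
proof -
  define L where "L = 1 - x"
  have L: "0 < L" "L < 1" using x by (auto simp: L_def)
  have bdd: "bounded B" by (rule bounded_subset[OF _ B(2)]) simp
  define Y1 where "Y1 = {y\<in>{0..L}. x / (1 - y) \<in> B}"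
  define Y2 where "Y2 = {y\<in>{0..L}. (1 - x - y) / (1 - x) \<in> B}"
  define Y3 where "Y3 = {y\<in>{0..L}. 1 - y \<in> B}"
  have Y1: "measure lebesgue Y1 \<le> measure lebesgue B / x"
    unfolding Y1_def
  proof (rule measure_preimage_le[OF B(1) bdd, where g' = "\<lambda>y. x / (1 - y)^2"])
    show "(\<lambda>y. x / (1 - y)) \<in> borel_measurable borel" by measurable
    show "((\<lambda>y. x / (1 - y)) has_real_derivative x / (1 - y)^2) (at y)" if "y \<in> {0..L}" for y
      using that L by (auto intro!: derivative_eq_intros simp: power2_eq_square)
    show "x \<le> \<bar>x / (1 - y)^2\<bar>" if "y \<in> {0..L}" for y
    proof -
      have "0 < (1 - y)^2" "(1 - y)^2 \<le> 1" using that L by (auto simp: power_le_one)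
      then show ?thesis using x by (simp add: le_divide_eq)
    qed
    show "inj_on (\<lambda>y. x / (1 - y)) {0..L}"
      using x L by (auto simp: inj_on_def field_simps)
  qed (use x in simp)
  have Y2: "measure lebesgue Y2 \<le> measure lebesgue B / 1"
    unfolding Y2_def
  proof (rule measure_preimage_le[OF B(1) bdd, where g' = "\<lambda>y. - 1 / (1 - x)"])
    show "(\<lambda>y. (1 - x - y) / (1 - x)) \<in> borel_measurable borel" by measurable
    show "((\<lambda>y. (1 - x - y) / (1 - x)) has_real_derivative - 1 / (1 - x)) (at y)" for y
      by (rule DERIV_cdivide) (auto intro!: derivative_eq_intros)
    show "1 \<le> \<bar>- 1 / (1 - x)\<bar>" for y
      using x by (simp add: abs_div_pos le_divide_eq)
    show "inj_on (\<lambda>y. (1 - x - y) / (1 - x)) {0..L}"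
      using x by (auto simp: inj_on_def field_simps)
  qed simp
  have Y3: "measure lebesgue Y3 \<le> measure lebesgue B / 1"
    unfolding Y3_def
  proof (rule measure_preimage_le[OF B(1) bdd, where g' = "\<lambda>y. - 1"])
    show "(\<lambda>y::real. 1 - y) \<in> borel_measurable borel" by measurable
    show "((\<lambda>y. 1 - y) has_real_derivative - 1) (at y)" for y
      by (auto intro!: derivative_eq_intros)
    show "inj_on (\<lambda>y. 1 - y) {0..L}" by (auto simp: inj_on_def)
  qed simp_all
  have "Y1 \<in> sets borel" "Y2 \<in> sets borel" "Y3 \<in> sets borel"
    unfolding Y1_def Y2_def Y3_def using B(1) by measurable
  moreover have "bounded Y1" "bounded Y2" "bounded Y3"
    unfolding Y1_def Y2_def Y3_def by (auto intro: bounded_subset[of "{0..L}"])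
  ultimately have Y_meas: "Y1 \<in> lmeasurable" "Y2 \<in> lmeasurable" "Y3 \<in> lmeasurable"
    by (auto intro: lmeasurable_if_borel_bounded)
  have "{y\<in>{0..1 - x}. x / (1 - y) \<in> B \<or> (1 - x - y) / (1 - x) \<in> B \<or> 1 - y \<in> B} = Y1 \<union> Y2 \<union> Y3"
    by (auto simp: Y1_def Y2_def Y3_def L_def)
  moreover have "measure lebesgue (Y1 \<union> Y2 \<union> Y3) \<le> measure lebesgue (Y1 \<union> Y2) + measure lebesgue Y3"
    using Y_meas by (intro measure_Un_le) auto
  moreover have "measure lebesgue (Y1 \<union> Y2) \<le> measure lebesgue Y1 + measure lebesgue Y2"
    using Y_meas by (intro measure_Un_le) auto
  ultimately show ?thesis using Y1 Y2 Y3 by (simp add: field_simps)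
qed

lemma exists_shift_avoiding:
  fixes x :: real
  assumes B: "B \<in> sets borel" "B \<subseteq> {0..1}"
    and x: "0 < x" "x < 1"
    and small: "measure lebesgue B * (1 / x + 2) < 1 - x"
  obtains y where "0 \<le> y" "y \<le> 1 - x"
    "x / (1 - y) \<notin> B" "(1 - x - y) / (1 - x) \<notin> B" "1 - y \<notin> B"
proof -
  define S where "S = {y\<in>{0..1 - x}. x / (1 - y) \<in> B \<or> (1 - x - y) / (1 - x) \<in> B \<or> 1 - y \<in> B}"
  have "S \<in> sets borel" unfolding S_def using B(1) by measurable
  moreover have "bounded S" unfolding S_def by (auto intro: bounded_subset[of "{0..1 - x}"])
  ultimately have "S \<in> lmeasurable" by (rule lmeasurable_if_borel_bounded)
  moreover have "measure lebesgue S < measure lebesgue {0..1 - x}"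
    using measure_bad_shifts_le[OF B x] small x unfolding S_def by simp
  ultimately have "\<not> {0..1 - x} \<subseteq> S"
    using measure_mono_fmeasurable[of "{0..1 - x}" S lebesgue] by auto
  then obtain y where "y \<in> {0..1 - x}" "y \<notin> S" by blast
  then show ?thesis by (intro that) (auto simp: S_def)
qed

section \<open>Locally bounded Cauchy equations\<close>

lemma additive_bounded_imp_zero:
  fixes D :: "real \<Rightarrow> real"
  assumes add: "\<And>x y. 1 \<le> x \<Longrightarrow> 1 \<le> y \<Longrightarrow> D (x + y) = D x + D y"
    and D_1: "D 1 = 0"
    and bnd: "\<And>x. x \<in> {1..2} \<Longrightarrow> \<bar>D x\<bar> \<le> B"
    and x: "1 \<le> x"
  shows "D x = 0"
proof -
  have D_shift: "D (y + real k) = D y" if "1 \<le> y" for y k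
  proof (induction k)
    case (Suc k)
    have "D (y + real (Suc k)) = D (y + real k) + D 1"
      using add[of "y + real k" 1] that by (simp add: ac_simps)
    then show ?case using Suc D_1 by simp
  qed simp
  have D_bounded: "\<bar>D z\<bar> \<le> B" if "1 \<le> z" for z
  proof -
    define k where "k = nat (\<lfloor>z\<rfloor> - 1)"
    have "real k = real_of_int \<lfloor>z\<rfloor> - 1" using that by (simp add: k_def le_floor_iff)
    then have "z - real k \<in> {1..2}"
      unfolding atLeastAtMost_iff using of_int_floor_le[of z] real_of_int_floor_add_one_gt[of z]
      by linarith
    then show ?thesis using D_shift[of "z - real k" k] bnd by auto
  qed
  have multiple_ge_1: "1 \<le> real (Suc n) * x" for n
    using mult_mono[of 1 "real (Suc n)" 1 x] x by simp
  have D_mult: "D (real (Suc n) * x) = real (Suc n) * D x" for n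
  proof (induction n)
    case (Suc n)
    have "D (real (Suc n) * x + x) = D (real (Suc n) * x) + D x"
      using add multiple_ge_1 x by blast
    then show ?case using Suc by (simp add: algebra_simps)
  qed simp
  show "D x = 0"
  proof (rule ccontr)
    assume "D x \<noteq> 0"
    then obtain n :: nat where "B < real n * \<bar>D x\<bar>"
      using reals_Archimedean2[of "B / \<bar>D x\<bar>"] by (auto simp: divide_less_eq)
    also have "\<dots> \<le> \<bar>real (Suc n) * D x\<bar>"
      by (simp add: abs_mult mult_right_mono)
    also have "\<dots> = \<bar>D (real (Suc n) * x)\<bar>"
      by (simp only: D_mult)
    also have "\<dots> \<le> B"
      using multiple_ge_1 by (rule D_bounded)
    finally show False by simp
  qed
qed

lemma additive_bounded_imp_linear:
  fixes f :: "real \<Rightarrow> real"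
  assumes add: "\<And>x y. 1 \<le> x \<Longrightarrow> 1 \<le> y \<Longrightarrow> f (x + y) = f x + f y"
    and bnd: "\<And>x. x \<in> {1..2} \<Longrightarrow> \<bar>f x\<bar> \<le> B"
    and x: "1 \<le> x"
  shows "f x = x * f 1"
proof -
  have "f y - y * f 1 = 0" if "1 \<le> y" for y
  proof (rule additive_bounded_imp_zero[where D = "\<lambda>z. f z - z * f 1" and B = "B + 2 * \<bar>f 1\<bar>"])
    show "f (a + b) - (a + b) * f 1 = (f a - a * f 1) + (f b - b * f 1)" if "1 \<le> a" "1 \<le> b" for a b
      using add[OF that] by (simp add: algebra_simps)
    show "\<bar>f a - a * f 1\<bar> \<le> B + 2 * \<bar>f 1\<bar>" if "a \<in> {1..2}" for a
    proof -
      have "\<bar>a * f 1\<bar> \<le> 2 * \<bar>f 1\<bar>" using that by (simp add: abs_mult mult_right_mono)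
      then show ?thesis using bnd[OF that] by linarith
    qed
  qed (use that in simp_all)
  from this[OF x] show ?thesis by simp
qed

lemma multiplicative_bounded_imp_log:
  fixes f :: "real \<Rightarrow> real"
  assumes mult: "\<And>x y. 1 \<le> x \<Longrightarrow> 1 \<le> y \<Longrightarrow> f (x * y) = f x + f y"
    and bnd: "\<And>x. x \<in> {1..exp 2} \<Longrightarrow> \<bar>f x\<bar> \<le> B"
    and x: "1 \<le> x"
  shows "f x = f (exp 1) * ln x"
proof -
  have exp_lin: "f (exp a) = a * f (exp 1)" if "1 \<le> a" for a
  proof (rule additive_bounded_imp_linear[where f = "\<lambda>a. f (exp a)" and B = B])
    show "f (exp (a + b)) = f (exp a) + f (exp b)" if "1 \<le> a" "1 \<le> b" for a b
      using that by (simp add: exp_add mult)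
  qed (use that bnd in auto)
  have "f (x * exp 1) = f x + f (exp 1)" using x by (intro mult) auto
  moreover have "f (x * exp 1) = (ln x + 1) * f (exp 1)"
    using exp_lin[of "ln x + 1"] x by (simp add: exp_add)
  ultimately show ?thesis by (simp add: algebra_simps)
qed

section \<open>Locally bounded cocycles are coboundaries\<close>

lemma borel_measurable_bounded_integrable_on:
  fixes f :: "real \<Rightarrow> real"
  assumes "f \<in> borel_measurable borel" "\<And>x. x \<in> {a..b} \<Longrightarrow> \<bar>f x\<bar> \<le> M"
  shows "f integrable_on {a..b}"
proof (rule measurable_bounded_by_integrable_imp_integrable_real)
  have "f \<in> borel_measurable lebesgue"
    using assms(1) measurable_lborel2 measurable_completion by metis
  then show "f \<in> borel_measurable (lebesgue_on {a..b})" by (rule measurable_restrict_space1)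
qed (use assms(2) in auto)

lemma abs_integral_le_real:
  fixes f :: "real \<Rightarrow> real"
  assumes "f integrable_on {a..b}" "a \<le> b" "0 \<le> M" "\<And>s. s \<in> {a..b} \<Longrightarrow> \<bar>f s\<bar> \<le> M"
  shows "\<bar>integral {a..b} f\<bar> \<le> M * (b - a)"
  using has_integral_bound[of M f "integral {a..b} f" a b] assms by auto

definition cocycle_potential :: "(real \<Rightarrow> real \<Rightarrow> real) \<Rightarrow> real \<Rightarrow> real" where
  "cocycle_potential G x = integral {0..x} (\<lambda>s. G (1 + s) 1) - integral {1..2} (G x)"

lemma integrable_on_if_bounded_on_box:
  fixes G :: "real \<Rightarrow> real \<Rightarrow> real" and p q :: "real \<Rightarrow> real"
  assumes "(\<lambda>s. G (p s) (q s)) \<in> borel_measurable borel"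
    and "\<forall>u\<in>{1..X}. \<forall>v\<in>{1..X}. \<bar>G u v\<bar> \<le> M"
    and "\<And>s. s \<in> {a..b} \<Longrightarrow> p s \<in> {1..X} \<and> q s \<in> {1..X}"
  shows "(\<lambda>s. G (p s) (q s)) integrable_on {a..b}"
  by (rule borel_measurable_bounded_integrable_on[OF assms(1), where M = M]) (use assms(2,3) in auto)

lemma integral_shift_real: "integral {a..b} (\<lambda>s. f (c + s)) = integral {c + a..c + b} f"
  for f :: "real \<Rightarrow> real"
  using integral_shift_Icc_real[of a b f c] by (simp add: o_def add.commute)

lemma cocycle_eq_coboundary_potential:
  fixes G :: "real \<Rightarrow> real \<Rightarrow> real"
  assumes cocycle: "\<And>u v w. 1 \<le> u \<Longrightarrow> 1 \<le> v \<Longrightarrow> 1 \<le> w \<Longrightarrow>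
      G u v + G (u + v) w = G u (v + w) + G v w"
    and meas [measurable]: "\<And>u. G u \<in> borel_measurable borel" "(\<lambda>u. G u 1) \<in> borel_measurable borel"
    and bounded: "\<forall>a\<in>{1..u + v + 2}. \<forall>b\<in>{1..u + v + 2}. \<bar>G a b\<bar> \<le> M"
    and u: "1 \<le> u" and v: "1 \<le> v"
  shows "G u v = cocycle_potential G (u + v) - cocycle_potential G u - cocycle_potential G v"
proof -
  define \<Psi> where "\<Psi> x = integral {1..2} (G x)" for x
  define Q where "Q x = integral {0..x} (\<lambda>s. G (1 + s) 1)" for x
  note integrable = integrable_on_if_bounded_on_box[OF _ bounded]
  have int: "G (u + v) integrable_on {1..2}" "G v integrable_on {1..2}"
    "(\<lambda>w. G u (v + w)) integrable_on {1..2}" "G u integrable_on {1..2 + v}"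
    "(\<lambda>s. G u (2 + s)) integrable_on {0..v}" "(\<lambda>s. G u (1 + s)) integrable_on {0..v}"
    "(\<lambda>s. G (u + (1 + s)) 1) integrable_on {0..v}" "(\<lambda>s. G (1 + s) 1) integrable_on {0..v}"
    "(\<lambda>s. G (1 + s) 1) integrable_on {0..u + v}"
    using u v by (intro integrable; (force | measurable))+
  txt \<open>Integrating the cocycle identity over \<open>w \<in> [1, 2]\<close> yields the integral of \<open>G u\<close> over a
    shifted window; the cocycle identity at \<open>w = 1\<close> turns the shift into increments of \<open>Q\<close>.\<close>
  have "G u v + \<Psi> (u + v) = integral {1..2} (\<lambda>w. G u v + G (u + v) w)"
    using integral_add[OF integrable_const_ivl int(1)] by (simp add: \<Psi>_def)
  also have "\<dots> = integral {1..2} (\<lambda>w. G u (v + w) + G v w)"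
    using u v by (intro integral_cong cocycle) auto
  also have "\<dots> = integral {1 + v..2 + v} (G u) + \<Psi> v"
    using integral_add[OF int(3,2)] integral_shift_real[where f = "G u" and c = v]
    by (simp add: \<Psi>_def add.commute)
  finally have integrated: "G u v + \<Psi> (u + v) = integral {1 + v..2 + v} (G u) + \<Psi> v" .
  have combine: "integral {1..c} (G u) + integral {c..2 + v} (G u) = integral {1..2 + v} (G u)"
    if "c \<in> {1..2 + v}" for c
    using that by (intro Henstock_Kurzweil_Integration.integral_combine int(4)) auto
  have "integral {1 + v..2 + v} (G u) - \<Psi> u
      = integral {2..2 + v} (G u) - integral {1..1 + v} (G u)"
    using combine[of 2] combine[of "1 + v"] v unfolding \<Psi>_def by simp
  also have "\<dots> = integral {0..v} (\<lambda>s. G u (2 + s) - G u (1 + s))"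
    using integral_shift_real[where f = "G u" and c = 2] integral_shift_real[where f = "G u" and c = 1]
      integral_diff[OF int(5,6)] by simp
  also have "\<dots> = integral {0..v} (\<lambda>s. G (u + (1 + s)) 1 - G (1 + s) 1)"
    using u cocycle[of u "1 + _" 1] by (intro integral_cong) (auto simp: algebra_simps)
  also have "\<dots> = integral {u..u + v} (\<lambda>s. G (1 + s) 1) - Q v"
    using integral_diff[OF int(7,8)] integral_shift_real[where f = "\<lambda>s. G (1 + s) 1" and c = u]
    by (simp add: Q_def ac_simps)
  also have "\<dots> = Q (u + v) - Q u - Q v"
    using Henstock_Kurzweil_Integration.integral_combine[OF _ _ int(9), of u] u v
    unfolding Q_def by simp
  finally show ?thesis using integrated by (simp add: cocycle_potential_def Q_def \<Psi>_def)
qed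

lemma cocycle_potential_bounded:
  fixes G :: "real \<Rightarrow> real \<Rightarrow> real"
  assumes [measurable]: "\<And>u. G u \<in> borel_measurable borel" "(\<lambda>u. G u 1) \<in> borel_measurable borel"
    and bounded: "\<forall>u\<in>{1..X + 2}. \<forall>v\<in>{1..X + 2}. \<bar>G u v\<bar> \<le> M"
    and x: "x \<in> {1..X}"
  shows "\<bar>cocycle_potential G x\<bar> \<le> (X + 1) * M"
proof -
  note integrable = integrable_on_if_bounded_on_box[OF _ bounded]
  have M: "0 \<le> M" using bounded x by force
  have "\<bar>integral {0..x} (\<lambda>s. G (1 + s) 1)\<bar> \<le> M * (x - 0)"
    using x M bounded by (intro abs_integral_le_real integrable; (measurable | simp))
  moreover have "\<bar>integral {1..2} (G x)\<bar> \<le> M * (2 - 1)"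
    using x M bounded by (intro abs_integral_le_real integrable[where p = "\<lambda>_. x", simplified];
        (measurable | simp))
  moreover have "M * x \<le> X * M" using x M by (simp add: mult.commute mult_left_mono)
  ultimately show ?thesis
    unfolding cocycle_potential_def
    using abs_triangle_ineq4[of "integral {0..x} (\<lambda>s. G (1 + s) 1)" "integral {1..2} (G x)"]
    by (simp add: algebra_simps)
qed

lemma homogeneous_coboundary_eq_entropy:
  fixes G :: "real \<Rightarrow> real \<Rightarrow> real" and \<phi> :: "real \<Rightarrow> real"
  assumes homog: "\<And>t u v. 1 \<le> t \<Longrightarrow> 1 \<le> u \<Longrightarrow> 1 \<le> v \<Longrightarrow> G (t * u) (t * v) = t * G u v"
    and coboundary: "\<And>u v. 1 \<le> u \<Longrightarrow> 1 \<le> v \<Longrightarrow> G u v = \<phi> (u + v) - \<phi> u - \<phi> v"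
    and bounded: "\<And>X. \<exists>M. \<forall>x\<in>{1..X}. \<bar>\<phi> x\<bar> \<le> M"
  obtains c where
    "\<And>u v. 1 \<le> u \<Longrightarrow> 1 \<le> v \<Longrightarrow> G u v = c * ((u + v) * ln (u + v) - u * ln u - v * ln v)"
proof -
  have one_le_mult: "1 \<le> a * b" if "1 \<le> a" "1 \<le> b" for a b :: real
    using mult_mono[of 1 a 1 b] that by simp
  have scaling: "\<phi> (t * x) = t * \<phi> x + x * (\<phi> t - t * \<phi> 1)" if t: "1 \<le> t" and x: "1 \<le> x" for t x
  proof -
    define A where "A y = \<phi> (t * y) - t * \<phi> y" for y
    have "A (y + z) = A y + A z" if "1 \<le> y" "1 \<le> z" for y z
    proof -
      have "\<phi> (t * y + t * z) - \<phi> (t * y) - \<phi> (t * z) = t * (\<phi> (y + z) - \<phi> y - \<phi> z)"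
        using coboundary[of "t * y" "t * z"] coboundary[of y z] homog[of t y z] that t one_le_mult
        by simp
      then show ?thesis by (simp add: A_def algebra_simps)
    qed
    moreover obtain M1 M2 where M: "\<forall>y\<in>{1..2 * t}. \<bar>\<phi> y\<bar> \<le> M1" "\<forall>y\<in>{1..2}. \<bar>\<phi> y\<bar> \<le> M2"
      using bounded by meson
    have "\<bar>A y\<bar> \<le> M1 + t * M2" if y: "y \<in> {1..2}" for y
    proof -
      have "t * y \<in> {1..2 * t}" using y t one_le_mult[of t y] by auto
      then have "\<bar>\<phi> (t * y)\<bar> \<le> M1" using M(1) by blast
      moreover have "\<bar>t * \<phi> y\<bar> \<le> t * M2" using M(2) y t by (simp add: abs_mult mult_left_mono)
      ultimately show ?thesis unfolding A_def by linarith
    qed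
    ultimately have "A x = x * A 1" using x by (rule additive_bounded_imp_linear)
    then show ?thesis by (simp add: A_def algebra_simps)
  qed
  obtain M where M: "\<forall>y\<in>{1..exp 2}. \<bar>\<phi> y\<bar> \<le> M" using bounded by blast
  define \<mu> where "\<mu> x = \<phi> x / x - \<phi> 1" for x
  have "\<mu> x = \<mu> (exp 1) * ln x" if "1 \<le> x" for x
  proof (rule multiplicative_bounded_imp_log)
    show "\<mu> (t * y) = \<mu> t + \<mu> y" if "1 \<le> t" "1 \<le> y" for t y
      using that scaling[OF that] by (simp add: \<mu>_def field_simps)
    show "\<bar>\<mu> y\<bar> \<le> M + \<bar>\<phi> 1\<bar>" if "y \<in> {1..exp 2}" for y
    proof -
      have "\<bar>\<phi> y / y\<bar> \<le> \<bar>\<phi> y\<bar>" using that by (simp add: abs_div divide_le_eq mult_le_cancel_left1)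
      moreover have "\<bar>\<phi> y\<bar> \<le> M" using M that by blast
      ultimately show ?thesis
        unfolding \<mu>_def using abs_triangle_ineq4[of "\<phi> y / y" "\<phi> 1"] by linarith
    qed
  qed (use that in simp)
  then have \<phi>_eq: "\<phi> x = x * (\<mu> (exp 1) * ln x + \<phi> 1)" if "1 \<le> x" for x
    using that by (simp add: \<mu>_def field_simps)
  show ?thesis
  proof (rule that)
    fix u v :: real assume "1 \<le> u" "1 \<le> v"
    then show "G u v = \<mu> (exp 1) * ((u + v) * ln (u + v) - u * ln u - v * ln v)"
      using coboundary[of u v] \<phi>_eq[of u] \<phi>_eq[of v] \<phi>_eq[of "u + v"]
      by (simp add: algebra_simps)
  qed
qed

section \<open>Homogeneous cocycles on the simplex\<close>

definition homog_ext :: "real \<Rightarrow> (real \<Rightarrow> real) \<Rightarrow> real \<Rightarrow> real \<Rightarrow> real" where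
  "homog_ext \<alpha> H u v = (if u + v > 0 then (u + v) powr \<alpha> * H (v / (u + v)) else 0)"

lemma homog_ext_scale:
  assumes "0 < t" "0 \<le> u" "0 \<le> v"
  shows "homog_ext \<alpha> H (t * u) (t * v) = t powr \<alpha> * homog_ext \<alpha> H u v"
proof (cases "u + v > 0")
  case True
  have "t * u + t * v = t * (u + v)" by (simp add: algebra_simps)
  then show ?thesis using True assms by (simp add: homog_ext_def powr_mult)
next
  case False
  then have "u = 0" "v = 0" using assms by auto
  then show ?thesis by (simp add: homog_ext_def)
qed

lemma homog_ext_simplex: "u + v = 1 \<Longrightarrow> homog_ext \<alpha> H u v = H v"
  by (simp add: homog_ext_def)

lemma homog_ext_left_0: "0 \<le> v \<Longrightarrow> H 1 = 0 \<Longrightarrow> homog_ext \<alpha> H 0 v = 0"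
  by (simp add: homog_ext_def)

lemma homog_ext_right_0: "0 \<le> u \<Longrightarrow> H 0 = 0 \<Longrightarrow> homog_ext \<alpha> H u 0 = 0"
  by (simp add: homog_ext_def)

lemma homog_ext_reflect:
  assumes "\<And>p. p \<in> {0..1} \<Longrightarrow> H' p = H (1 - p)" "0 \<le> u" "0 \<le> v"
  shows "homog_ext \<alpha> H' v u = homog_ext \<alpha> H u v"
proof (cases "u + v > 0")
  case True
  then have "1 - u / (u + v) = v / (u + v)" by (simp add: field_simps)
  then have "H' (u / (v + u)) = H (v / (u + v))"
    using True assms by (simp add: add.commute)
  then show ?thesis using True by (simp add: homog_ext_def add.commute)
qed (simp add: homog_ext_def add.commute)

lemma borel_measurable_homog_ext [measurable]:
  assumes [measurable]: "H \<in> borel_measurable borel"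
    "f \<in> borel_measurable borel" "g \<in> borel_measurable borel"
  shows "(\<lambda>x. homog_ext \<alpha> H (f x) (g x)) \<in> borel_measurable borel"
  unfolding homog_ext_def by measurable

locale tsallis_cocycle =
  fixes \<alpha> :: real and H :: "real \<Rightarrow> real"
  assumes alpha_pos: "0 < \<alpha>"
    and H_measurable [measurable]: "H \<in> borel_measurable borel"
    and H_0: "H 0 = 0" and H_1: "H 1 = 0"
    and cocycle_simplex: "\<And>u v w. 0 \<le> u \<Longrightarrow> 0 \<le> v \<Longrightarrow> 0 \<le> w \<Longrightarrow> u + v + w = 1 \<Longrightarrow>
      homog_ext \<alpha> H u v + homog_ext \<alpha> H (u + v) w = homog_ext \<alpha> H u (v + w) + homog_ext \<alpha> H v w"
begin

abbreviation G :: "real \<Rightarrow> real \<Rightarrow> real" where "G \<equiv> homog_ext \<alpha> H"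

lemma cocycle:
  assumes "0 \<le> u" "0 \<le> v" "0 \<le> w"
  shows "G u v + G (u + v) w = G u (v + w) + G v w"
proof (cases "u + v + w = 0")
  case True
  then have "u = 0" "v = 0" "w = 0" using assms by auto
  then show ?thesis by (simp add: homog_ext_def)
next
  case False
  define S where "S = u + v + w"
  have S: "0 < S" using False assms by (simp add: S_def)
  have rescale: "G a b = S powr \<alpha> * G (a / S) (b / S)" if "0 \<le> a" "0 \<le> b" for a b
    using homog_ext_scale[of S "a / S" "b / S"] S that by simp
  have "G (u / S) (v / S) + G (u / S + v / S) (w / S) = G (u / S) (v / S + w / S) + G (v / S) (w / S)"
    using assms S by (intro cocycle_simplex) (auto simp: S_def simp flip: add_divide_distrib)
  then show ?thesis
    using rescale[of u v] rescale[of "u + v" w] rescale[of u "v + w"] rescale[of v w] assms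
    by (simp add: add_divide_distrib distrib_left [symmetric])
qed

lemma H_decomposition:
  assumes "0 \<le> x" "0 \<le> y" "x + y \<le> 1" "x < 1" "y < 1"
  shows "H x = (1 - y) powr \<alpha> * H (x / (1 - y)) - (1 - x) powr \<alpha> * H ((1 - x - y) / (1 - x)) + H (1 - y)"
proof -
  have "G y (1 - x - y) + G (1 - x) x = G y (1 - y) + G (1 - x - y) x"
    using cocycle_simplex[of y "1 - x - y" x] assms by simp
  then show ?thesis using assms by (simp add: homog_ext_def)
qed

lemma H_bounded:
  assumes "0 < a" "a \<le> b" "b < 1"
  obtains M where "\<And>x. x \<in> {a..b} \<Longrightarrow> \<bar>H x\<bar> \<le> M"
proof -
  have "0 < (1 - b) / (1 / a + 2)" using assms by (intro divide_pos_pos add_pos_pos) auto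
  then obtain n :: nat where n: "measure lebesgue {z\<in>{0..1}. real n < \<bar>H z\<bar>} < (1 - b) / (1 / a + 2)"
    by (rule measure_superlevel_set_small[OF H_measurable])
  define B where "B = {z\<in>{0..1}. real n < \<bar>H z\<bar>}"
  have B: "B \<in> sets borel" "B \<subseteq> {0..1}" unfolding B_def by (measurable, auto)
  have "\<bar>H x\<bar> \<le> 3 * real n" if x: "x \<in> {a..b}" for x
  proof -
    have x_01: "0 < x" "x < 1" using x assms by auto
    have "measure lebesgue B * (1 / x + 2) \<le> measure lebesgue B * (1 / a + 2)"
      using x assms by (intro mult_left_mono) (auto simp: frac_le)
    also have "\<dots> < 1 - x"
      using n x assms by (simp add: B_def pos_less_divide_eq add_pos_pos)
    finally obtain y where y: "0 \<le> y" "y \<le> 1 - x"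
      "x / (1 - y) \<notin> B" "(1 - x - y) / (1 - x) \<notin> B" "1 - y \<notin> B"
      using exists_shift_avoiding[OF B x_01] by blast
    have bounds: "\<bar>H (x / (1 - y))\<bar> \<le> n" "\<bar>H ((1 - x - y) / (1 - x))\<bar> \<le> n" "\<bar>H (1 - y)\<bar> \<le> n"
      using y x assms by (auto simp: B_def divide_le_eq_1)
    moreover have "(1 - y) powr \<alpha> \<le> 1" "(1 - x) powr \<alpha> \<le> 1"
      using y x assms alpha_pos by (auto intro: powr_le1)
    moreover have damp: "\<bar>c * h\<bar> \<le> n" if "0 \<le> c" "c \<le> 1" "\<bar>h\<bar> \<le> n" for c h :: real
      using that mult_left_le_one_le[of "\<bar>h\<bar>" c] by (simp add: abs_mult)
    ultimately have "\<bar>(1 - y) powr \<alpha> * H (x / (1 - y))\<bar> \<le> n"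
      "\<bar>(1 - x) powr \<alpha> * H ((1 - x - y) / (1 - x))\<bar> \<le> n"
      by (auto intro: damp)
    moreover have "H x = (1 - y) powr \<alpha> * H (x / (1 - y))
        - (1 - x) powr \<alpha> * H ((1 - x - y) / (1 - x)) + H (1 - y)"
      using x_01 y by (intro H_decomposition) auto
    ultimately show ?thesis using bounds(3) by linarith
  qed
  then show ?thesis using that by blast
qed

lemma G_bounded:
  assumes "0 < c" "c \<le> d"
  obtains M where "\<And>u v. u \<in> {c..d} \<Longrightarrow> v \<in> {c..d} \<Longrightarrow> \<bar>G u v\<bar> \<le> M"
proof -
  define e where "e = c / (2 * d)"
  have e: "0 < e" "e \<le> 1 - e" "1 - e < 1"
    using assms by (auto simp: e_def field_simps)
  obtain M where M: "\<And>x. x \<in> {e..1 - e} \<Longrightarrow> \<bar>H x\<bar> \<le> M"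
    using H_bounded[OF e] by blast
  have ratio_ge: "e \<le> v / (u + v)" if "u \<in> {c..d}" "v \<in> {c..d}" for u v
  proof -
    have "c * u \<le> v * d" using that assms mult_mono[of c v u d] by auto
    moreover have "c * v \<le> d * v" using that assms by (auto intro: mult_right_mono)
    ultimately have "c * (u + v) \<le> 2 * d * v" by (simp add: algebra_simps)
    then show ?thesis using that assms by (simp add: e_def field_simps)
  qed
  have "\<bar>G u v\<bar> \<le> (2 * d) powr \<alpha> * M" if uv: "u \<in> {c..d}" "v \<in> {c..d}" for u v
  proof -
    have pos: "0 < u + v" using uv assms by auto
    then have "u / (u + v) = 1 - v / (u + v)" by (simp add: field_simps)
    then have "v / (u + v) \<in> {e..1 - e}" using ratio_ge[OF uv] ratio_ge[of v u] uv by (simp add: add.commute)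
    then have "\<bar>H (v / (u + v))\<bar> \<le> M" by (rule M)
    moreover have "(u + v) powr \<alpha> \<le> (2 * d) powr \<alpha>" using uv pos alpha_pos by (intro powr_mono2) auto
    ultimately show ?thesis
      using pos by (simp add: homog_ext_def abs_mult mult_mono)
  qed
  then show ?thesis using that by blast
qed

lemma G_coboundary:
  obtains \<phi> where "\<And>u v. 1 \<le> u \<Longrightarrow> 1 \<le> v \<Longrightarrow> G u v = \<phi> (u + v) - \<phi> u - \<phi> v"
    and "\<And>X. \<exists>M. \<forall>x\<in>{1..X}. \<bar>\<phi> x\<bar> \<le> M"
proof (rule that[of "cocycle_potential G"])
  have G_box: "\<exists>M. \<forall>u\<in>{1..X}. \<forall>v\<in>{1..X}. \<bar>G u v\<bar> \<le> M" for X
  proof -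
    obtain M where "\<And>u v. u \<in> {1..max 1 X} \<Longrightarrow> v \<in> {1..max 1 X} \<Longrightarrow> \<bar>G u v\<bar> \<le> M"
      using G_bounded[of 1 "max 1 X"] by auto
    then have "\<forall>u\<in>{1..X}. \<forall>v\<in>{1..X}. \<bar>G u v\<bar> \<le> M" by auto
    then show ?thesis by blast
  qed
  have G_meas: "G u \<in> borel_measurable borel" "(\<lambda>v. G v 1) \<in> borel_measurable borel" for u
    by measurable measurable
  have cocycle_ge_1: "G u v + G (u + v) w = G u (v + w) + G v w"
    if "1 \<le> u" "1 \<le> v" "1 \<le> w" for u v w
    using that by (intro cocycle) auto
  show "G u v = cocycle_potential G (u + v) - cocycle_potential G u - cocycle_potential G v"
    if uv: "1 \<le> u" "1 \<le> v" for u v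
  proof -
    obtain M where M: "\<forall>a\<in>{1..u + v + 2}. \<forall>b\<in>{1..u + v + 2}. \<bar>G a b\<bar> \<le> M"
      using G_box by blast
    show ?thesis by (rule cocycle_eq_coboundary_potential[OF cocycle_ge_1 G_meas M uv])
  qed
  show "\<exists>M. \<forall>x\<in>{1..X}. \<bar>cocycle_potential G x\<bar> \<le> M" for X
  proof -
    obtain M where "\<forall>u\<in>{1..X + 2}. \<forall>v\<in>{1..X + 2}. \<bar>G u v\<bar> \<le> M" using G_box by blast
    then show ?thesis using cocycle_potential_bounded[OF G_meas] by blast
  qed
qed

lemma G_sym:
  assumes "0 \<le> u" "0 \<le> v"
  shows "G u v = G v u"
proof (cases "u = 0 \<or> v = 0")
  case True
  then show ?thesis using assms H_0 H_1 by (auto simp: homog_ext_left_0 homog_ext_right_0)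
next
  case False
  then have uv: "0 < u" "0 < v" using assms by auto
  obtain \<phi> where \<phi>: "\<And>u v. 1 \<le> u \<Longrightarrow> 1 \<le> v \<Longrightarrow> G u v = \<phi> (u + v) - \<phi> u - \<phi> v"
    and "\<And>X. \<exists>M. \<forall>x\<in>{1..X}. \<bar>\<phi> x\<bar> \<le> M"
    using G_coboundary by metis
  define t where "t = 1 / u + 1 / v"
  have t: "0 < t" "1 \<le> t * u" "1 \<le> t * v"
    using uv by (auto simp: t_def distrib_right add_pos_pos)
  have "t powr \<alpha> * G u v = G (t * u) (t * v)" using homog_ext_scale t(1) assms by simp
  also have "\<dots> = G (t * v) (t * u)" using \<phi>[OF t(2,3)] \<phi>[OF t(3,2)] by (simp add: add.commute)
  also have "\<dots> = t powr \<alpha> * G v u" using homog_ext_scale t(1) assms by simp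
  finally show ?thesis using t(1) by simp
qed

lemma G_double:
  assumes "0 \<le> u" "0 \<le> v"
  shows "G (2 * u) (2 * v) + G u u + G v v = 2 * G u v + G (u + v) (u + v)"
proof -
  have "G (u + u) v + G (u + u + v) v = G (u + u) (v + v) + G v v"
    "G u u + G (u + u) v = G u (u + v) + G u v"
    using assms by (intro cocycle; simp)+
  moreover have "G (u + v) u + G (u + u + v) v = G (u + v) (u + v) + G u v"
  proof -
    have "u + u + v = u + v + u" by simp
    then show ?thesis using cocycle[of "u + v" u v] assms by simp
  qed
  moreover have "G u (u + v) = G (u + v) u" using assms by (intro G_sym) auto
  moreover have "G (2 * u) (2 * v) = G (u + u) (v + v)" by (simp only: mult_2)
  ultimately show ?thesis by linarith
qed

lemma H_eq_s_alpha_if_ne_1: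
  assumes "\<alpha> \<noteq> 1" "x \<in> {0..1}"
  shows "H x = G 1 1 * (\<alpha> - 1) / (2 powr \<alpha> - 2) * s_alpha \<alpha> x"
proof (cases "x = 0 \<or> x = 1")
  case True
  then show ?thesis using alpha_pos H_0 H_1 by (auto simp: s_alpha_def)
next
  case False
  then have x: "0 < x" "x < 1" using assms by auto
  have two_powr: "2 powr \<alpha> \<noteq> 2"
    using assms(1) powr_inj[of 2 \<alpha> 1] by auto
  have diag: "G w w = w powr \<alpha> * G 1 1" if "0 < w" for w
    using homog_ext_scale[of w 1 1] that by simp
  have "G (2 * (1 - x)) (2 * x) = 2 powr \<alpha> * H x"
    using homog_ext_scale[of 2 "1 - x" x] x by (simp add: homog_ext_simplex)
  then have "2 powr \<alpha> * H x + (1 - x) powr \<alpha> * G 1 1 + x powr \<alpha> * G 1 1 = 2 * H x + G 1 1"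
    using G_double[of "1 - x" x] diag[of "1 - x"] diag[of x] x by (simp add: homog_ext_simplex)
  then have "(2 powr \<alpha> - 2) * H x = G 1 1 * (1 - x powr \<alpha> - (1 - x) powr \<alpha>)"
    by (simp add: algebra_simps)
  then have "H x = G 1 1 * (1 - x powr \<alpha> - (1 - x) powr \<alpha>) / (2 powr \<alpha> - 2)"
    using two_powr by (simp add: eq_divide_eq mult.commute)
  also have "\<dots> = G 1 1 * (\<alpha> - 1) / (2 powr \<alpha> - 2) * s_alpha \<alpha> x"
  proof -
    have "1 - \<alpha> \<noteq> 0" using assms(1) by simp
    then have "1 - x powr \<alpha> - (1 - x) powr \<alpha> = (\<alpha> - 1) * s_alpha \<alpha> x"
      by (simp add: s_alpha_def field_simps)
    then show ?thesis by simp
  qed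
  finally show ?thesis .
qed

lemma H_eq_s_alpha_if_eq_1:
  assumes "\<alpha> = 1"
  obtains c where "\<And>x. x \<in> {0..1} \<Longrightarrow> H x = c * s_alpha \<alpha> x"
proof -
  obtain \<phi> where "\<And>u v. 1 \<le> u \<Longrightarrow> 1 \<le> v \<Longrightarrow> G u v = \<phi> (u + v) - \<phi> u - \<phi> v"
    and "\<And>X. \<exists>M. \<forall>x\<in>{1..X}. \<bar>\<phi> x\<bar> \<le> M"
    using G_coboundary by metis
  moreover have "G (t * u) (t * v) = t * G u v" if "1 \<le> t" "1 \<le> u" "1 \<le> v" for t u v
    using homog_ext_scale[of t u v] that assms by simp
  ultimately obtain c where
    c: "\<And>u v. 1 \<le> u \<Longrightarrow> 1 \<le> v \<Longrightarrow> G u v = c * ((u + v) * ln (u + v) - u * ln u - v * ln v)"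
    using homogeneous_coboundary_eq_entropy by metis
  have "H x = c * s_alpha \<alpha> x" if "x \<in> {0..1}" for x
  proof (cases "x = 0 \<or> x = 1")
    case True
    then show ?thesis using assms H_0 H_1 by (auto simp: s_alpha_def xlogx_def)
  next
    case False
    then have x: "0 < x" "x < 1" using that by auto
    define t where "t = 1 / (x * (1 - x))"
    have t: "0 < t" "t * (1 - x) = 1 / x" "t * x = 1 / (1 - x)" "1 / x + 1 / (1 - x) = t"
      using x by (auto simp: t_def field_simps)
    have ln_t: "ln t = - ln x - ln (1 - x)"
      using x by (simp add: t_def ln_div ln_mult)
    have "t * H x = G (1 / x) (1 / (1 - x))"
      using homog_ext_scale[of t "1 - x" x] t x assms by (simp add: homog_ext_simplex)
    also have "\<dots> = c * (t * ln t - 1 / x * ln (1 / x) - 1 / (1 - x) * ln (1 / (1 - x)))"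
      using c[of "1 / x" "1 / (1 - x)"] x by (simp add: t(4))
    also have "\<dots> = t * (c * (- (x * ln x) - (1 - x) * ln (1 - x)))"
    proof -
      have "ln (1 / x) = - ln x" "ln (1 / (1 - x)) = - ln (1 - x)" using x by (simp_all add: ln_div)
      then show ?thesis unfolding ln_t t(2,3)[symmetric] by (simp add: algebra_simps)
    qed
    finally show ?thesis using x t(1) assms by (simp add: s_alpha_def xlogx_def)
  qed
  then show ?thesis using that by blast
qed

lemma H_eq_s_alpha:
  obtains c where "\<And>x. x \<in> {0..1} \<Longrightarrow> H x = c * s_alpha \<alpha> x"
  using H_eq_s_alpha_if_ne_1 H_eq_s_alpha_if_eq_1 by metis

end

section \<open>The two-function equation\<close>

lemma tsallis_cocycle_if_reflected_equation:
  assumes "0 < \<alpha>" "H \<in> borel_measurable borel" "H 0 = 0" "H 1 = 0"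
    and reflect: "\<And>p. p \<in> {0..1} \<Longrightarrow> H' p = H (1 - p)"
    and equation: "\<And>p0 p1 p2. 0 \<le> p0 \<Longrightarrow> 0 \<le> p1 \<Longrightarrow> 0 \<le> p2 \<Longrightarrow> p0 + p1 + p2 = 1 \<Longrightarrow>
      homog_ext \<alpha> H p0 p1 - H p1 = homog_ext \<alpha> H' p0 p2 - H' p2"
  shows "tsallis_cocycle \<alpha> H"
proof
  fix u v w :: real
  assume uvw: "0 \<le> u" "0 \<le> v" "0 \<le> w" "u + v + w = 1"
  have "homog_ext \<alpha> H v w - H w = homog_ext \<alpha> H' v u - H' u"
    using uvw by (intro equation) auto
  moreover have "homog_ext \<alpha> H' v u = homog_ext \<alpha> H u v"
    using uvw by (intro homog_ext_reflect reflect) auto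
  moreover have "H' u = homog_ext \<alpha> H u (v + w)"
  proof -
    have e: "1 - u = v + w" using uvw by simp
    show ?thesis using uvw reflect[of u] by (simp add: homog_ext_simplex add.assoc e)
  qed
  moreover have "H w = homog_ext \<alpha> H (u + v) w" using uvw by (simp add: homog_ext_simplex)
  ultimately show "homog_ext \<alpha> H u v + homog_ext \<alpha> H (u + v) w
      = homog_ext \<alpha> H u (v + w) + homog_ext \<alpha> H v w" by linarith
qed (use assms in auto)

lemma s_alpha_reflect: "s_alpha \<alpha> (1 - p) = s_alpha \<alpha> p"
  by (simp add: s_alpha_def algebra_simps)

lemma simplex1_eq_image: "simplex1 = (\<lambda>p. (1 - p, p)) ` {0..1}"
  by (force simp: simplex1_def image_iff)

definition simplex1_param :: "(real \<times> real \<Rightarrow> real) \<Rightarrow> real \<Rightarrow> real" where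
  "simplex1_param f p = (if p \<in> {0..1} then f (1 - p, p) else 0)"

lemma borel_measurable_simplex1_param:
  assumes "f \<in> borel_measurable (restrict_space borel simplex1)"
  shows "simplex1_param f \<in> borel_measurable borel"
proof -
  have "(\<lambda>p::real. (1 - p, p)) \<in> measurable (restrict_space borel {0..1}) (restrict_space borel simplex1)"
    by (rule measurable_restrict_space3) (auto simp: simplex1_def)
  then have "(\<lambda>p. f (1 - p, p)) \<in> borel_measurable (restrict_space borel {0..1})"
    using assms by (rule measurable_compose)
  then have "(\<lambda>p. indicator {0..1} p * f (1 - p, p)) \<in> borel_measurable borel"
    by (subst (asm) borel_measurable_restrict_space_iff) auto
  moreover have "simplex1_param f = (\<lambda>p. indicator {0..1} p * f (1 - p, p))"
    by (auto simp: simplex1_param_def fun_eq_iff)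
  ultimately show ?thesis by simp
qed

lemma scaled_term_eq_homog_ext:
  assumes "0 \<le> x" "0 \<le> y" "x + y + q = 1"
  shows "scaled_term \<alpha> f q x y = homog_ext \<alpha> (simplex1_param f) x y"
proof (cases "q = 1")
  case True
  then show ?thesis using assms by (simp add: scaled_term_def homog_ext_def)
next
  case False
  then have xy: "x + y = 1 - q" and "0 < 1 - q" using assms by auto
  moreover have "y / (1 - q) \<le> 1" "1 - y / (1 - q) = x / (1 - q)"
    using calculation assms by (auto simp: field_simps)
  ultimately show ?thesis
    using False assms unfolding scaled_term_def homog_ext_def simplex1_param_def xy by simp
qed

lemma simplex1_param_equation:
  assumes "\<forall>(p0, p1, p2) \<in> simplex2.
      scaled_term \<alpha> f1 p2 p0 p1 - f1 (1 - p1, p1) = scaled_term \<alpha> f2 p1 p0 p2 - f2 (1 - p2, p2)"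
    and "0 \<le> p0" "0 \<le> p1" "0 \<le> p2" "p0 + p1 + p2 = 1"
  shows "homog_ext \<alpha> (simplex1_param f1) p0 p1 - simplex1_param f1 p1
       = homog_ext \<alpha> (simplex1_param f2) p0 p2 - simplex1_param f2 p2"
proof -
  have "(p0, p1, p2) \<in> simplex2" using assms(2-) by (auto simp: simplex2_def)
  then show ?thesis
    using assms scaled_term_eq_homog_ext[of p0 p1 p2 \<alpha> f1] scaled_term_eq_homog_ext[of p0 p2 p1 \<alpha> f2]
    by (auto simp: simplex1_param_def)
qed

theorem proposition4p10:
  fixes \<alpha> :: real and f1 f2 :: "real \<times> real \<Rightarrow> real"
  assumes "\<alpha> > 0"
    and "f1 \<in> borel_measurable (restrict_space borel simplex1)"
    and "f2 \<in> borel_measurable (restrict_space borel simplex1)"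
    and "f1 (0, 1) = 0" and "f1 (1, 0) = 0"
    and "f2 (0, 1) = 0" and "f2 (1, 0) = 0"
    and "\<forall>(p0, p1, p2) \<in> simplex2.
           scaled_term \<alpha> f1 p2 p0 p1 - f1 (1 - p1, p1)
         = scaled_term \<alpha> f2 p1 p0 p2 - f2 (1 - p2, p2)"
  shows "(\<forall>x \<in> simplex1. f1 x = f2 x) \<and>
         (\<exists>c::real. \<forall>p \<in> {0..1}. f1 (p, 1 - p) = c * s_alpha \<alpha> p)"
proof -
  define H1 H2 where "H1 = simplex1_param f1" and "H2 = simplex1_param f2"
  note equation = simplex1_param_equation[OF assms(8), folded H1_def H2_def]
  have reflect: "H2 p = H1 (1 - p)" if "p \<in> {0..1}" for p
    using equation[of 0 "1 - p" p] that assms(4,6)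
    by (simp add: homog_ext_left_0 H1_def H2_def simplex1_param_def)
  interpret tsallis_cocycle \<alpha> H1
    using borel_measurable_simplex1_param[OF assms(2)] assms(4,5)
    by (intro tsallis_cocycle_if_reflected_equation[OF assms(1) _ _ _ reflect equation])
       (auto simp: H1_def simplex1_param_def)
  obtain c where c: "\<And>p. p \<in> {0..1} \<Longrightarrow> H1 p = c * s_alpha \<alpha> p"
    using H_eq_s_alpha by metis
  have f1_eq: "f1 (1 - p, p) = c * s_alpha \<alpha> p" and f2_eq: "f2 (1 - p, p) = c * s_alpha \<alpha> p"
    if "p \<in> {0..1}" for p
    using that c[of p] c[of "1 - p"] reflect[of p]
    by (simp_all add: H1_def H2_def simplex1_param_def s_alpha_reflect)
  show ?thesis
    using f1_eq f2_eq f1_eq[of "1 - p" for p] by (auto simp: simplex1_eq_image s_alpha_reflect)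
qed

end
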